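(* Let $\nu_0=0$ (so $\nu_1=1$) and $s,u>0$, $\gamma\ge 0$, and consider the ODE $\dot y=F(y)$ with $F(y)=-y(1-y)\big[s+\gamma(1-y)\big]+u(1-y)$, regarded on $\mathbb R$. Put $\hat u=s$ and, for $\gamma>0$, $\check u=\frac1\gamma\big(\frac{s+\gamma}{2}\big)^2$. (a) If $\gamma=0$, the equilibria are $\bar y_1=1$ and $\bar y_2=u/s$, with $\bar y_1=\bar y_2=1$ if $u=\hat u$. The smaller of the two is always stable; the other one (if distinct) is unstable. (b) Let $\gamma>0$. If $u>\check u$, then $\bar y_1=1$ is the only equilibrium, and it is stable. If $u\le\check u$, the equilibria are $$\bar y_1=1,\qquad \bar y_2=\tfrac12\Big(1+\tfrac s\gamma-\sqrt\sigma\Big),\qquad \bar y_3=\tfrac12\Big(1+\tfrac s\gamma+\sqrt\sigma\Big),\qquad \sigma=\Big(1+\tfrac s\gamma\Big)^2-4\tfrac u\gamma\ge 0.$$ Their positions, together with which of them are stable as equilibria in $[0,1]$, are as follows. - If $u<\hat u$ (any $\gamma>0$): $0<\bar y_2<\bar y_1=1<\bar y_3$; $\bar y_2$ is stable. - If $u=\hat u$ and $\gamma<s$: $1=\bar y_1=\bar y_2<\bar y_3=s/\gamma$; $\bar y_1=\bar y_2$ is stable. - If $u=\hat u$ and $\gamma=s$: $1=\bar y_1=\bar y_2=\bar y_3$, which is stable. - If $u=\hat u$ and $\gamma>s$: $0<\bar y_2=s/\gamma<\bar y_1=\bar y_3=1$; $\bar y_2$ is stable. - If $\hat u<u<\check u$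 and $\gamma<s$: $1=\bar y_1<\bar y_2<\bar y_3$; $\bar y_1$ is stable. - If $\hat u<u<\check u$ and $\gamma>s$: $0<\bar y_2<\bar y_3<\bar y_1=1$; $\bar y_2$ and $\bar y_1$ are stable. - If $u=\check u$ and $\gamma<s$: $1=\bar y_1<\bar y_2=\bar y_3=(\gamma+s)/(2\gamma)$; $\bar y_1$ is stable. - If $u=\check u$ and $\gamma=s$: $1=\bar y_1=\bar y_2=\bar y_3$, which is stable. - If $u=\check u$ and $\gamma>s$: $\frac12<\bar y_2=\bar y_3=(\gamma+s)/(2\gamma)<\bar y_1=1$; $\bar y_1$ is stable.
   Context: "Stable" means locally asymptotically stable. The case $\gamma=s$, $\hat u<u<\check u$ cannot occur, because $\hat u=\check u$ when $\gamma=s$; in general $\check u-\hat u=(s-\gamma)^2/(4\gamma)\ge 0$. *)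

theory Defs
  imports "HOL-Analysis.Analysis"
begin

definition Fsel :: "real \<Rightarrow> real \<Rightarrow> real \<Rightarrow> real \<Rightarrow> real" where
  "Fsel s \<gamma> u y = - y * (1 - y) * (s + \<gamma> * (1 - y)) + u * (1 - y)"

definition ode_solution :: "(real \<Rightarrow> real) \<Rightarrow> (real \<Rightarrow> real) \<Rightarrow> bool" where
  "ode_solution F x \<longleftrightarrow> (\<forall>t\<ge>0. (x has_real_derivative F (x t)) (at t within {0..}))"

definition loc_asym_stable :: "real set \<Rightarrow> (real \<Rightarrow> real) \<Rightarrow> real \<Rightarrow> bool" where
  "loc_asym_stable S F yb \<longleftrightarrow>
     (\<forall>\<epsilon>>0. \<exists>\<delta>>0. \<forall>x. ode_solution F x \<and> x 0 \<in> S \<and> \<bar>x 0 - yb\<bar> < \<delta>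
                \<longrightarrow> (\<forall>t\<ge>0. \<bar>x t - yb\<bar> < \<epsilon>)) \<and>
     (\<exists>\<delta>>0. \<forall>x. ode_solution F x \<and> x 0 \<in> S \<and> \<bar>x 0 - yb\<bar> < \<delta>
                \<longrightarrow> (x \<longlongrightarrow> yb) at_top)"

end

theory Submission
  imports Defs
begin

(* Factor F y = (1 - y) (gamma y^2 - (s + gamma) y + u). Besides y = 1, the equilibria are the roots
   y2 <= y3 of the quadratic, and y2 + y3 = 1 + s/gamma, y2 y3 = u/gamma, (1 - y2)(1 - y3) = (u - s)/gamma
   locate them relative to 0 and 1 in every regime. Stability is then read off from the sign of F, which
   is all that matters for a scalar equation with locally Lipschitz right-hand side: by a Gronwall
   estimate no solution crosses an equilibrium, so a solution starting where F points towards e is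
   monotone and converges to e; and if F < 0 on (a, e) with F a = 0, separation of variables yields
   solutions starting arbitrarily close below e that decrease towards a and never come back. *)

section \<open>Scalar autonomous equations\<close>

definition locally_lipschitz :: "(real \<Rightarrow> real) \<Rightarrow> bool" where
  "locally_lipschitz F \<longleftrightarrow> (\<forall>a b. \<exists>L. L-lipschitz_on {a..b} F)"

lemma continuous_deriv_imp_locally_lipschitz:
  assumes deriv: "\<And>y. (F has_real_derivative F' y) (at y)" and cont: "continuous_on UNIV F'"
  shows "locally_lipschitz F"
  unfolding locally_lipschitz_def
proof (intro allI)
  fix a b :: real
  obtain B where "B > 0" and B: "\<And>y. y \<in> {a..b} \<Longrightarrow> norm (F' y) \<le> B"
    using compact_imp_bounded[OF compact_continuous_image[OF continuous_on_subset[OF cont]]]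
    by (metis bounded_pos compact_Icc image_eqI subset_UNIV)
  have "B-lipschitz_on {a..b} F"
  proof (rule lipschitz_onI)
    fix y z assume "y \<in> {a..b}" "z \<in> {a..b}"
    then have "norm (F y - F z) \<le> B * norm (y - z)"
      using B by (intro field_differentiable_bound[OF convex_real_interval(5)])
        (auto intro: has_field_derivative_at_within[OF deriv])
    then show "dist (F y) (F z) \<le> B * dist y z" by (simp add: dist_norm)
  qed (use \<open>B > 0\<close> in simp)
  then show "\<exists>L. L-lipschitz_on {a..b} F" ..
qed

lemma locally_lipschitz_reflect:
  assumes "locally_lipschitz F"
  shows "locally_lipschitz (\<lambda>z. - F (- z))"
  unfolding locally_lipschitz_def
proof (intro allI)
  fix a b :: real
  obtain L where L: "L-lipschitz_on {-b..-a} F"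
    using assms unfolding locally_lipschitz_def by blast
  have "L-lipschitz_on {a..b} (\<lambda>z. - F (- z))"
    using lipschitz_onD[OF L, of "-y" "-z" for y z] lipschitz_on_nonneg[OF L]
    by (intro lipschitz_onI) (auto simp: dist_real_def abs_minus_commute)
  then show "\<exists>L. L-lipschitz_on {a..b} (\<lambda>z. - F (- z))" ..
qed

lemma locally_lipschitz_continuous_on:
  assumes "locally_lipschitz F"
  shows "continuous_on {a..b} F"
  using assms lipschitz_on_continuous_on unfolding locally_lipschitz_def by blast

lemma ode_solution_continuous_on:
  "ode_solution F x \<Longrightarrow> continuous_on {0..} x"
  unfolding ode_solution_def continuous_on_eq_continuous_within
  using DERIV_continuous by (metis atLeast_iff)

lemma ode_solution_has_real_derivative:
  "ode_solution F x \<Longrightarrow> 0 < t \<Longrightarrow> (x has_real_derivative F (x t)) (at t)"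
  unfolding ode_solution_def
  by (metis at_within_interior interior_real_atLeast greaterThan_iff less_imp_le)

lemma ode_solution_reflect:
  "ode_solution F x \<Longrightarrow> ode_solution (\<lambda>z. - F (- z)) (\<lambda>t. - x t)"
  unfolding ode_solution_def by (auto intro!: derivative_eq_intros)

lemma ode_solution_damped_gap_decreasing:
  assumes sol: "ode_solution F x" and L: "L-lipschitz_on K F" and "p \<in> K" "0 \<le> F p"
    and "0 \<le> t'" "t' \<le> t" and below: "\<And>r. t' < r \<Longrightarrow> r < t \<Longrightarrow> x r \<in> K \<and> x r < p"
  shows "(p - x t) * exp (- L * t) \<le> (p - x t') * exp (- L * t')"
proof (rule DERIV_nonpos_imp_decreasing_open[OF \<open>t' \<le> t\<close>])
  fix r assume r: "t' < r" "r < t"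
  have "((\<lambda>r. (p - x r) * exp (- L * r)) has_real_derivative
      (- F (x r) - L * (p - x r)) * exp (- L * r)) (at r)"
    using ode_solution_has_real_derivative[OF sol, of r] r \<open>0 \<le> t'\<close>
    by (auto intro!: derivative_eq_intros simp: algebra_simps)
  \<comment> \<open>Gronwall: below p, the Lipschitz bound and F p \<ge> 0 give (p - x)' \<le> L (p - x).\<close>
  moreover have "F p - F (x r) \<le> L * (p - x r)"
    using lipschitz_onD[OF L \<open>p \<in> K\<close>, of "x r"] below[OF r] by (auto simp: dist_real_def)
  then have "(- F (x r) - L * (p - x r)) * exp (- L * r) \<le> 0"
    using \<open>0 \<le> F p\<close> by (intro mult_nonpos_nonneg) auto
  ultimately show "\<exists>y. ((\<lambda>r. (p - x r) * exp (- L * r)) has_real_derivative y) (at r) \<and> y \<le> 0"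
    by blast
next
  show "continuous_on {t'..t} (\<lambda>r. (p - x r) * exp (- L * r))"
    using ode_solution_continuous_on[OF sol] \<open>0 \<le> t'\<close>
    by (intro continuous_intros) (auto elim: continuous_on_subset)
qed

lemma ode_solution_stays_above:
  assumes lip: "locally_lipschitz F" and sol: "ode_solution F x" and "0 \<le> F p"
    and t0: "0 \<le> t0" "p \<le> x t0" "t0 \<le> t"
  shows "p \<le> x t"
proof (rule ccontr)
  assume "\<not> p \<le> x t"
  then have xt: "x t < p" by simp
  have cont: "continuous_on {t0..t} x"
    using ode_solution_continuous_on[OF sol] by (rule continuous_on_subset) (use t0 in auto)
  define T where "T = {t0..t} \<inter> x -` {p..}"
  have "closed T" unfolding T_def
    by (rule continuous_closed_preimage[OF cont]) auto
  moreover have "t0 \<in> T" "bdd_above T" using t0 by (auto simp: T_def)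
  ultimately have "Sup T \<in> T" using closed_contains_Sup by blast
  define t' where "t' = Sup T"
  have t': "t0 \<le> t'" "t' < t" "p \<le> x t'"
    using \<open>Sup T \<in> T\<close> xt by (auto simp: T_def t'_def less_eq_real_def)
  have below: "x r < p" if "t' < r" "r \<le> t" for r
    using cSup_upper[of r T] \<open>bdd_above T\<close> that t' by (force simp: T_def t'_def)
  obtain M where M: "\<And>r. r \<in> {t0..t} \<Longrightarrow> \<bar>x r\<bar> \<le> M"
    using compact_imp_bounded[OF compact_continuous_image[OF cont]]
    by (metis bounded_real compact_Icc image_eqI)
  define K where "K = {- M - \<bar>p\<bar>..M + \<bar>p\<bar>}"
  obtain L where L: "L-lipschitz_on K F"
    using lip unfolding locally_lipschitz_def K_def by blast
  have "p \<in> K" using M[of t0] t0 by (auto simp: K_def)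
  moreover have "x r \<in> K" if "t' < r" "r < t" for r
    using M[of r] that t' by (auto simp: K_def abs_le_iff)
  ultimately have "(p - x t) * exp (- L * t) \<le> (p - x t') * exp (- L * t')"
    using below t' t0 by (intro ode_solution_damped_gap_decreasing[OF sol L _ \<open>0 \<le> F p\<close>]) auto
  moreover have "(p - x t') * exp (- L * t') \<le> 0" using t' by (simp add: mult_nonpos_nonneg)
  moreover have "0 < (p - x t) * exp (- L * t)" using xt by simp
  ultimately show False by simp
qed

lemma ode_solution_stays_below:
  assumes "locally_lipschitz F" "ode_solution F x" "F p \<le> 0" "0 \<le> t0" "x t0 \<le> p" "t0 \<le> t"
  shows "x t \<le> p"
  using ode_solution_stays_above[OF locally_lipschitz_reflect[OF assms(1)]
      ode_solution_reflect[OF assms(2)], of "- p" t0 t] assms(3-) by simp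

lemma ode_solution_exceeds_level:
  assumes sol: "ode_solution F x" and "0 < m" and F_ge: "\<And>t. 0 \<le> t \<Longrightarrow> x t \<le> c \<Longrightarrow> m \<le> F (x t)"
  shows "\<exists>T\<ge>0. c < x T"
proof (rule ccontr)
  assume "\<not> (\<exists>T\<ge>0. c < x T)"
  then have le: "x t \<le> c" if "0 \<le> t" for t using that by force
  define T where "T = (c - x 0) / m + 1"
  have T: "0 < T" using \<open>0 < m\<close> le[of 0] by (simp add: T_def add_nonneg_pos)
  have "x 0 - m * 0 \<le> x T - m * T"
  proof (rule DERIV_nonneg_imp_increasing_open[OF less_imp_le[OF T]])
    fix r assume r: "0 < r" "r < T"
    have "((\<lambda>r. x r - m * r) has_real_derivative F (x r) - m) (at r)"
      using ode_solution_has_real_derivative[OF sol r(1)] by (auto intro!: derivative_eq_intros)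
    then show "\<exists>y. ((\<lambda>r. x r - m * r) has_real_derivative y) (at r) \<and> 0 \<le> y"
      using F_ge[of r] le[of r] r by force
  qed (intro continuous_intros continuous_on_subset[OF ode_solution_continuous_on[OF sol]], auto)
  moreover have "m * T = c - x 0 + m" using \<open>0 < m\<close> by (simp add: T_def field_simps)
  ultimately show False using le[of T] T \<open>0 < m\<close> by simp
qed

lemma ode_solution_monotone_below_equilibrium:
  assumes lip: "locally_lipschitz F" and sol: "ode_solution F x" and "F e = 0"
    and F_nonneg: "\<And>y. a \<le> y \<Longrightarrow> y \<le> e \<Longrightarrow> 0 \<le> F y" and "a \<le> x 0" "x 0 \<le> e"
  shows "0 \<le> t \<Longrightarrow> x 0 \<le> x t \<and> x t \<le> e"
    and "0 \<le> r \<Longrightarrow> r \<le> t \<Longrightarrow> x r \<le> x t"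
proof -
  show bounds: "x 0 \<le> x t \<and> x t \<le> e" if "0 \<le> t" for t
    using ode_solution_stays_above[OF lip sol F_nonneg[OF \<open>a \<le> x 0\<close> \<open>x 0 \<le> e\<close>] order_refl order_refl that]
      ode_solution_stays_below[OF lip sol _ order_refl \<open>x 0 \<le> e\<close> that] \<open>F e = 0\<close>
    by simp
  show "x r \<le> x t" if "0 \<le> r" "r \<le> t"
    using bounds[OF that(1)] \<open>a \<le> x 0\<close>
    by (intro ode_solution_stays_above[OF lip sol F_nonneg that(1) order_refl that(2)]) auto
qed

lemma ode_solution_tendsto_from_below:
  assumes lip: "locally_lipschitz F" and sol: "ode_solution F x" and "F e = 0"
    and pos: "\<And>y. a \<le> y \<Longrightarrow> y < e \<Longrightarrow> 0 < F y" and "a \<le> x 0" "x 0 \<le> e"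
  shows "\<forall>t\<ge>0. x 0 \<le> x t \<and> x t \<le> e" and "(x \<longlongrightarrow> e) at_top"
proof -
  have "0 \<le> F y" if "a \<le> y" "y \<le> e" for y
    using pos[of y] \<open>F e = 0\<close> that by (cases "y = e") auto
  note monotone = ode_solution_monotone_below_equilibrium[OF lip sol \<open>F e = 0\<close> this assms(5,6)]
  then show "\<forall>t\<ge>0. x 0 \<le> x t \<and> x t \<le> e" by blast
  show "(x \<longlongrightarrow> e) at_top"
    unfolding tendsto_iff
  proof (intro allI impI)
    fix \<epsilon> :: real assume "0 < \<epsilon>"
    define c where "c = e - \<epsilon> / 2"
    have "\<exists>T\<ge>0. c < x T"
    proof (cases "c < x 0")
      case False
      have "\<exists>y\<in>{x 0..c}. \<forall>z\<in>{x 0..c}. F y \<le> F z"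
        using False by (intro continuous_attains_inf locally_lipschitz_continuous_on[OF lip]) auto
      then obtain y where y: "y \<in> {x 0..c}" and y_min: "\<And>z. z \<in> {x 0..c} \<Longrightarrow> F y \<le> F z"
        by blast
      have "0 < F y" using y \<open>a \<le> x 0\<close> \<open>0 < \<epsilon>\<close> by (intro pos) (auto simp: c_def)
      then show ?thesis
        by (rule ode_solution_exceeds_level[OF sol]) (use y_min monotone(1) in auto)
    qed auto
    then obtain T where "0 \<le> T" "c < x T" by blast
    then have "dist (x t) e < \<epsilon>" if "T \<le> t" for t
      using monotone[of t] monotone(2)[of T t] that \<open>0 < \<epsilon>\<close> by (simp add: c_def dist_real_def)
    then show "\<forall>\<^sub>F t in at_top. dist (x t) e < \<epsilon>"
      unfolding eventually_at_top_linorder by blast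
  qed
qed

lemma ode_solution_tendsto_from_above:
  assumes lip: "locally_lipschitz F" and sol: "ode_solution F x" and "F e = 0"
    and neg: "\<And>y. e < y \<Longrightarrow> y \<le> b \<Longrightarrow> F y < 0" and "x 0 \<le> b" "e \<le> x 0"
  shows "\<forall>t\<ge>0. e \<le> x t \<and> x t \<le> x 0" and "(x \<longlongrightarrow> e) at_top"
proof -
  note reflected = ode_solution_tendsto_from_below[OF locally_lipschitz_reflect[OF lip]
      ode_solution_reflect[OF sol], of "- e" "- b"]
  show "\<forall>t\<ge>0. e \<le> x t \<and> x t \<le> x 0"
    using reflected(1) assms by (force intro: neg)
  have "((\<lambda>t. - x t) \<longlongrightarrow> - e) at_top"
    using reflected(2) assms by (force intro: neg)
  then show "(x \<longlongrightarrow> e) at_top" by (rule tendsto_minus_cancel)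
qed

section \<open>Stability and instability from the sign of the right-hand side\<close>

lemma loc_asym_stable_if_sign_change:
  assumes lip: "locally_lipschitz F" and "F e = 0" and "a \<le> e" "e \<le> b"
    and pos: "\<And>y. a \<le> y \<Longrightarrow> y < e \<Longrightarrow> 0 < F y"
    and neg: "\<And>y. e < y \<Longrightarrow> y \<le> b \<Longrightarrow> F y < 0"
    and "0 < d" and near: "\<And>y. y \<in> S \<Longrightarrow> \<bar>y - e\<bar> < d \<Longrightarrow> a \<le> y \<and> y \<le> b"
  shows "loc_asym_stable S F e"
proof -
  have attracted: "(\<forall>t\<ge>0. \<bar>x t - e\<bar> \<le> \<bar>x 0 - e\<bar>) \<and> (x \<longlongrightarrow> e) at_top"
    if sol: "ode_solution F x" and "x 0 \<in> S" "\<bar>x 0 - e\<bar> < d" for x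
  proof (cases "x 0 \<le> e")
    case True
    then show ?thesis
      using ode_solution_tendsto_from_below[OF lip sol \<open>F e = 0\<close> pos, of a] near that by fastforce
  next
    case False
    then show ?thesis
      using ode_solution_tendsto_from_above[OF lip sol \<open>F e = 0\<close> neg, of b] near that by fastforce
  qed
  show ?thesis unfolding loc_asym_stable_def
  proof (intro conjI allI impI)
    fix \<epsilon> :: real assume "0 < \<epsilon>"
    show "\<exists>\<delta>>0. \<forall>x. ode_solution F x \<and> x 0 \<in> S \<and> \<bar>x 0 - e\<bar> < \<delta> \<longrightarrow> (\<forall>t\<ge>0. \<bar>x t - e\<bar> < \<epsilon>)"
      using attracted \<open>0 < \<epsilon>\<close> \<open>0 < d\<close> by (intro exI[of _ "min \<epsilon> d"]) force
  qed (use attracted \<open>0 < d\<close> in blast)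
qed

lemma loc_asym_stable_if_attracting:
  assumes "locally_lipschitz F" "F e = 0" "a < e" "e < b"
    and "\<And>y. a \<le> y \<Longrightarrow> y < e \<Longrightarrow> 0 < F y" "\<And>y. e < y \<Longrightarrow> y \<le> b \<Longrightarrow> F y < 0"
  shows "loc_asym_stable S F e"
  by (rule loc_asym_stable_if_sign_change[OF assms(1,2) _ _ assms(5,6), where d = "min (e - a) (b - e)"])
    (use assms(3,4) in \<open>auto simp: abs_less_iff\<close>)

lemma loc_asym_stable_at_upper_end:
  assumes "locally_lipschitz F" "F e = 0" "a < e" "S \<subseteq> {..e}"
    and "\<And>y. a \<le> y \<Longrightarrow> y < e \<Longrightarrow> 0 < F y"
  shows "loc_asym_stable S F e"
  by (rule loc_asym_stable_if_sign_change[OF assms(1,2) _ order_refl assms(5), where d = "e - a"])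
    (use assms(3,4) in \<open>auto simp: abs_less_iff\<close>)

lemma not_loc_asym_stable_if_solutions_escape:
  assumes escape: "\<And>\<delta>. 0 < \<delta> \<Longrightarrow> \<exists>x. ode_solution F x \<and> x 0 \<in> S \<and> \<bar>x 0 - e\<bar> < \<delta> \<and> x 0 \<noteq> e \<and>
             (\<forall>t\<ge>0. \<bar>x 0 - e\<bar> \<le> \<bar>x t - e\<bar>)"
  shows "\<not> loc_asym_stable S F e"
proof
  assume "loc_asym_stable S F e"
  then obtain \<delta> where "0 < \<delta>"
    and conv: "\<And>x. ode_solution F x \<Longrightarrow> x 0 \<in> S \<Longrightarrow> \<bar>x 0 - e\<bar> < \<delta> \<Longrightarrow> (x \<longlongrightarrow> e) at_top"
    unfolding loc_asym_stable_def by blast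
  obtain x where x: "ode_solution F x" "x 0 \<in> S" "\<bar>x 0 - e\<bar> < \<delta>" "x 0 \<noteq> e"
    and away: "\<forall>t\<ge>0. \<bar>x 0 - e\<bar> \<le> \<bar>x t - e\<bar>"
    using escape[OF \<open>0 < \<delta>\<close>] by blast
  have lim: "((\<lambda>t. \<bar>x t - e\<bar>) \<longlongrightarrow> \<bar>e - e\<bar>) at_top"
    using conv[OF x(1-3)] by (intro tendsto_intros)
  have "\<forall>\<^sub>F t in at_top. \<bar>x 0 - e\<bar> \<le> \<bar>x t - e\<bar>"
    using away by (intro eventually_at_top_linorderI[of 0]) auto
  then have "\<bar>x 0 - e\<bar> \<le> \<bar>e - e\<bar>" by (rule tendsto_lowerbound[OF lim]) simp
  then show False using x(4) by simp
qed

(* Instability needs escaping solutions to exist: loc_asym_stable says nothing about initial values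
   from which no solution starts. They are obtained by separation of variables, as inverses of a
   time map H with H' = 1/F. *)

lemma time_map_attains:
  fixes H :: "real \<Rightarrow> real"
  assumes "a < x1" and cont: "\<And>y. a < y \<Longrightarrow> y \<le> x1 \<Longrightarrow> isCont H y"
    and unbounded: "\<exists>y. a < y \<and> y \<le> x1 \<and> t \<le> H y" and "H x1 \<le> t"
  shows "\<exists>z. a < z \<and> z \<le> x1 \<and> H z = t"
proof -
  obtain y where y: "a < y" "y \<le> x1" "t \<le> H y" using unbounded by blast
  have "continuous_on {y..x1} H"
    using cont y by (intro continuous_at_imp_continuous_on) auto
  then obtain z where "y \<le> z" "z \<le> x1" "H z = t"
    using IVT2'[of H x1 t y] y \<open>H x1 \<le> t\<close> by auto
  then show ?thesis using y by (intro exI[of _ z]) auto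
qed

lemma ode_solution_from_time_map:
  fixes F H :: "real \<Rightarrow> real"
  assumes "a < x0" "x0 < b" "H x0 = 0"
    and H': "\<And>y. a < y \<Longrightarrow> y < b \<Longrightarrow> (H has_real_derivative inverse (F y)) (at y)"
    and neg: "\<And>y. a < y \<Longrightarrow> y < b \<Longrightarrow> F y < 0"
    and unbounded: "\<And>t. \<exists>y. a < y \<and> y \<le> x0 \<and> t \<le> H y"
  shows "\<exists>x. ode_solution F x \<and> x 0 = x0 \<and> (\<forall>t\<ge>0. a < x t \<and> x t \<le> x0)"
proof -
  let ?I = "{a<..<b}"
  have H_less: "H z < H y" if "a < y" "y < z" "z < b" for y z
    by (rule DERIV_neg_imp_decreasing[OF that(2)]) (use that H' neg in force)
  have H_cont: "isCont H y" if "a < y" "y < b" for y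
    using H'[OF that] by (rule DERIV_isCont)
  have inj: "inj_on H ?I"
    by (rule inj_onI) (metis H_less greaterThanLessThan_iff linorder_neqE_linordered_idom less_irrefl)
  define x1 where "x1 = (x0 + b) / 2"
  have x1: "x0 < x1" "x1 < b" using assms(1,2) by (auto simp: x1_def)
  have onto: "t \<in> H ` ?I" if t: "H x1 < t" for t
  proof -
    have "a < x1" using assms(1) x1 by simp
    moreover have "isCont H y" if "a < y" "y \<le> x1" for y using H_cont that x1 by simp
    moreover have "\<exists>y. a < y \<and> y \<le> x1 \<and> t \<le> H y" using unbounded[of t] x1 by force
    ultimately obtain z where "a < z" "z \<le> x1" "H z = t"
      using time_map_attains less_imp_le[OF t] by blast
    then show ?thesis using x1 by force
  qed
  define x where "x t = the_inv_into ?I H t" for t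
  have x_in: "a < x t" "x t < b" and H_x: "H (x t) = t" if "H x1 < t" for t
    using the_inv_into_into[OF inj onto[OF that] subset_refl] f_the_inv_into_f[OF inj onto[OF that]]
    by (auto simp: x_def)
  have H_x1: "H x1 < 0" using H_less[of x0 x1] assms x1 by simp
  have x_0: "x 0 = x0" using the_inv_into_f_f[OF inj, of x0] assms by (simp add: x_def)
  have x_le: "x t \<le> x0" if "0 \<le> t" for t
    using H_less[of x0 "x t"] x_in[of t] H_x[of t] H_x1 that assms by force
  have "(x has_real_derivative F (x t)) (at t)" if "H x1 < t" for t
  proof -
    have "isCont x (H (x t))"
      by (rule isCont_inverse_function2[where a = "(a + x t) / 2" and b = "(x t + b) / 2"])
        (use x_in[OF that] in \<open>auto intro!: H_cont the_inv_into_f_f[OF inj] simp: x_def\<close>)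
    then have "(x has_real_derivative inverse (inverse (F (x t)))) (at t)"
      using x_in[OF that] H_x that neg[of "x t"]
      by (intro DERIV_inverse_function[where f = H and a = "H x1" and b = "t + 1"] H') auto
    then show ?thesis by simp
  qed
  then have "ode_solution F x"
    unfolding ode_solution_def using H_x1 by (auto intro: has_field_derivative_at_within)
  then show ?thesis using x_0 x_in x_le H_x1 by force
qed

lemma time_map_log_lower_bound:
  fixes F H :: "real \<Rightarrow> real"
  assumes H': "\<And>w. a < w \<Longrightarrow> w \<le> x0 \<Longrightarrow> (H has_real_derivative inverse (F w)) (at w)"
    and "0 < L" and F_bound: "\<And>w. a < w \<Longrightarrow> w \<le> x0 \<Longrightarrow> 0 < - F w \<and> - F w \<le> L * (w - a)"
    and "a < y" "y \<le> x0"
  shows "H x0 + (ln (x0 - a) - ln (y - a)) / L \<le> H y"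
proof -
  define K where "K w = H w + ln (w - a) / L" for w
  have "K x0 \<le> K y"
  proof (rule DERIV_nonpos_imp_nonincreasing[OF \<open>y \<le> x0\<close>])
    fix w assume w: "y \<le> w" "w \<le> x0"
    then have "a < w" using \<open>a < y\<close> by simp
    have "(K has_real_derivative inverse (F w) + inverse (w - a) / L) (at w)"
      unfolding K_def using H'[OF \<open>a < w\<close> w(2)] \<open>a < w\<close>
      by (auto intro!: derivative_eq_intros simp: divide_inverse)
    moreover have "inverse (L * (w - a)) \<le> inverse (- F w)"
      using F_bound[OF \<open>a < w\<close> w(2)] by (intro le_imp_inverse_le) auto
    then have "inverse (F w) + inverse (w - a) / L \<le> 0"
      by (simp add: inverse_minus_eq mult.commute divide_inverse)
    ultimately show "\<exists>D. (K has_real_derivative D) (at w) \<and> D \<le> 0" by blast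
  qed
  then show ?thesis by (simp add: K_def diff_divide_distrib)
qed

lemma ode_solution_exists_decreasing:
  assumes lip: "locally_lipschitz F" and "F a = 0" "a < x0" "x0 < b"
    and neg: "\<And>y. a < y \<Longrightarrow> y < b \<Longrightarrow> F y < 0"
  shows "\<exists>x. ode_solution F x \<and> x 0 = x0 \<and> (\<forall>t\<ge>0. a < x t \<and> x t \<le> x0)"
proof -
  obtain L where L: "L-lipschitz_on {a..b} F" using lip unfolding locally_lipschitz_def by blast
  have F_bound: "- F y \<le> L * (y - a)" if "a \<le> y" "y \<le> b" for y
    using lipschitz_onD[OF L, of y a] that \<open>F a = 0\<close> \<open>a < x0\<close> \<open>x0 < b\<close>
    by (auto simp: dist_real_def)
  have "0 < L * (x0 - a)" using F_bound[of x0] neg[of x0] assms(3,4) by fastforce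
  then have "0 < L" using \<open>a < x0\<close> by (simp add: zero_less_mult_iff)
  have "isCont (\<lambda>y. inverse (F y)) y" if "a < y" "y < b" for y
    using locally_lipschitz_continuous_on[OF lip, of a b] that neg[OF that]
    by (intro continuous_intros) (auto simp: continuous_on_interior)
  then obtain G where G: "\<And>y. a < y \<Longrightarrow> y < b \<Longrightarrow> (G has_real_derivative inverse (F y)) (at y)"
    using einterval_antiderivative[of "ereal a" "ereal b" "\<lambda>y. inverse (F y)"] \<open>a < x0\<close> \<open>x0 < b\<close>
    by (auto simp: has_real_derivative_iff_has_vector_derivative)
  define H where "H y = G y - G x0" for y
  have H': "(H has_real_derivative inverse (F y)) (at y)" if "a < y" "y < b" for y
    unfolding H_def using G[OF that] by (auto intro!: derivative_eq_intros)
  \<comment> \<open>The time map blows up logarithmically at a, so the solution never reaches a.\<close>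
  have H_bound: "(ln (x0 - a) - ln (y - a)) / L \<le> H y" if "a < y" "y \<le> x0" for y
    using time_map_log_lower_bound[OF H' \<open>0 < L\<close> _ that] F_bound neg \<open>x0 < b\<close>
    by (force simp: H_def)
  show ?thesis
  proof (rule ode_solution_from_time_map[OF \<open>a < x0\<close> \<open>x0 < b\<close> _ H' neg])
    fix t
    define y where "y = a + (x0 - a) * exp (- L * (\<bar>t\<bar> + 1))"
    have "(x0 - a) * exp (- L * (\<bar>t\<bar> + 1)) \<le> x0 - a"
      using \<open>0 < L\<close> \<open>a < x0\<close> by (intro mult_left_le) auto
    then have y: "a < y" "y \<le> x0"
      using \<open>a < x0\<close> unfolding y_def by (simp, linarith)
    have "ln (y - a) = ln (x0 - a) - L * (\<bar>t\<bar> + 1)"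
      using \<open>a < x0\<close> by (simp add: y_def ln_mult)
    then have "L * (\<bar>t\<bar> + 1) \<le> L * H y"
      using H_bound[OF y] \<open>0 < L\<close> by (simp add: pos_divide_le_eq mult.commute)
    then have "t \<le> H y" using \<open>0 < L\<close> by simp
    then show "\<exists>y. a < y \<and> y \<le> x0 \<and> t \<le> H y" using y by blast
  qed (auto simp: H_def)
qed

lemma ode_solution_exists_increasing:
  assumes lip: "locally_lipschitz F" and "F b = 0" "a < x0" "x0 < b"
    and pos: "\<And>y. a < y \<Longrightarrow> y < b \<Longrightarrow> 0 < F y"
  shows "\<exists>x. ode_solution F x \<and> x 0 = x0 \<and> (\<forall>t\<ge>0. x0 \<le> x t \<and> x t < b)"
proof -
  obtain x where x: "ode_solution (\<lambda>z. - F (- z)) x" "x 0 = - x0" "\<forall>t\<ge>0. - b < x t \<and> x t \<le> - x0"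
    using ode_solution_exists_decreasing[OF locally_lipschitz_reflect[OF lip], of "- b" "- x0" "- a"]
      assms(2-4) pos by force
  have "ode_solution F (\<lambda>t. - x t)" using ode_solution_reflect[OF x(1)] by simp
  then show ?thesis using x(2,3) by (intro exI[of _ "\<lambda>t. - x t"]) force
qed

lemma not_loc_asym_stable_if_repelling_left:
  assumes lip: "locally_lipschitz F" and "F a = 0" "a < e"
    and neg: "\<And>y. a < y \<Longrightarrow> y < e \<Longrightarrow> F y < 0" and "{a<..<e} \<subseteq> S"
  shows "\<not> loc_asym_stable S F e"
proof (rule not_loc_asym_stable_if_solutions_escape)
  fix \<delta> :: real assume "0 < \<delta>"
  define x0 where "x0 = max ((a + e) / 2) (e - \<delta> / 2)"
  have "(a + e) / 2 \<le> x0" "e - \<delta> / 2 \<le> x0" "x0 < e"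
    using \<open>a < e\<close> \<open>0 < \<delta>\<close> by (auto simp: x0_def)
  then have x0: "a < x0" "x0 < e" "e - x0 < \<delta>" using \<open>a < e\<close> \<open>0 < \<delta>\<close> by auto
  obtain x where "ode_solution F x" "x 0 = x0" "\<forall>t\<ge>0. a < x t \<and> x t \<le> x0"
    using ode_solution_exists_decreasing[OF lip \<open>F a = 0\<close> x0(1,2) neg] by blast
  then show "\<exists>x. ode_solution F x \<and> x 0 \<in> S \<and> \<bar>x 0 - e\<bar> < \<delta> \<and> x 0 \<noteq> e \<and>
      (\<forall>t\<ge>0. \<bar>x 0 - e\<bar> \<le> \<bar>x t - e\<bar>)"
    using x0 \<open>{a<..<e} \<subseteq> S\<close> by (intro exI[of _ x]) auto
qed

lemma not_loc_asym_stable_if_repelling_right: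
  assumes lip: "locally_lipschitz F" and "F b = 0" "e < b"
    and pos: "\<And>y. e < y \<Longrightarrow> y < b \<Longrightarrow> 0 < F y" and "{e<..<b} \<subseteq> S"
  shows "\<not> loc_asym_stable S F e"
proof (rule not_loc_asym_stable_if_solutions_escape)
  fix \<delta> :: real assume "0 < \<delta>"
  define x0 where "x0 = min ((e + b) / 2) (e + \<delta> / 2)"
  have "x0 \<le> (e + b) / 2" "x0 \<le> e + \<delta> / 2" "e < x0"
    using \<open>e < b\<close> \<open>0 < \<delta>\<close> by (auto simp: x0_def min_def)
  then have x0: "e < x0" "x0 < b" "x0 - e < \<delta>" using \<open>e < b\<close> \<open>0 < \<delta>\<close> by auto
  obtain x where "ode_solution F x" "x 0 = x0" "\<forall>t\<ge>0. x0 \<le> x t \<and> x t < b"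
    using ode_solution_exists_increasing[OF lip \<open>F b = 0\<close> x0(1,2) pos] by blast
  then show "\<exists>x. ode_solution F x \<and> x 0 \<in> S \<and> \<bar>x 0 - e\<bar> < \<delta> \<and> x 0 \<noteq> e \<and>
      (\<forall>t\<ge>0. \<bar>x 0 - e\<bar> \<le> \<bar>x t - e\<bar>)"
    using x0 \<open>{e<..<b} \<subseteq> S\<close> by (intro exI[of _ x]) auto
qed

definition stable_equilibria :: "real set \<Rightarrow> (real \<Rightarrow> real) \<Rightarrow> real set" where
  "stable_equilibria S F = {y \<in> S. F y = 0 \<and> loc_asym_stable S F y}"

lemma stable_equilibria_eq_upper_end:
  assumes "locally_lipschitz F" "F b = 0" "a < b" and pos: "\<And>y. a \<le> y \<Longrightarrow> y < b \<Longrightarrow> 0 < F y"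
  shows "stable_equilibria {a..b} F = {b}"
proof -
  have "loc_asym_stable {a..b} F b"
    using assms by (intro loc_asym_stable_at_upper_end[where a = a]) auto
  moreover have "y = b" if "y \<in> {a..b}" "F y = 0" for y
    using pos[of y] that by force
  ultimately show ?thesis using assms by (auto simp: stable_equilibria_def)
qed

lemma locally_lipschitz_quadratic:
  "locally_lipschitz (\<lambda>y. c * (y - m) * (y - M))"
  by (rule continuous_deriv_imp_locally_lipschitz[where F' = "\<lambda>y. c * (2 * y - m - M)"])
    (auto intro!: derivative_eq_intros continuous_intros simp: algebra_simps)

lemma quadratic_flow_equilibria:
  assumes F: "\<And>y. F y = c * (y - m) * (y - M)" and "0 < c" "m < M"
  shows "loc_asym_stable S F m"
    and "{m<..<M} \<subseteq> S \<Longrightarrow> \<not> loc_asym_stable S F M"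
proof -
  have F_eq: "F = (\<lambda>y. c * (y - m) * (y - M))" using F by blast
  have lip: "locally_lipschitz F" unfolding F_eq by (rule locally_lipschitz_quadratic)
  show "loc_asym_stable S F m"
    by (rule loc_asym_stable_if_attracting[OF lip, where a = "m - 1" and b = "(m + M) / 2"])
      (use assms in \<open>auto simp: zero_less_mult_iff mult_less_0_iff\<close>)
  show "\<not> loc_asym_stable S F M" if "{m<..<M} \<subseteq> S"
    by (rule not_loc_asym_stable_if_repelling_left[OF lip, where a = m])
      (use assms that in \<open>auto simp: mult_less_0_iff\<close>)
qed

section \<open>The selection equation\<close>

lemma Fsel_eq_factor: "Fsel s \<gamma> u y = (1 - y) * (\<gamma> * y\<^sup>2 - (s + \<gamma>) * y + u)"
  unfolding Fsel_def by (simp add: algebra_simps power2_eq_square)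

lemma locally_lipschitz_Fsel: "locally_lipschitz (Fsel s \<gamma> u)"
proof (rule continuous_deriv_imp_locally_lipschitz)
  fix y
  show "(Fsel s \<gamma> u has_real_derivative
      (1 - y) * (2 * \<gamma> * y - (s + \<gamma>)) - (\<gamma> * y\<^sup>2 - (s + \<gamma>) * y + u)) (at y)"
    unfolding Fsel_eq_factor[abs_def] by (auto intro!: derivative_eq_intros)
qed (intro continuous_intros)

lemma Fsel_gamma_zero_equilibria:
  assumes "0 < s" "0 < u"
  shows "{y. Fsel s 0 u y = 0} = {1, u / s}"
    and "loc_asym_stable {0..1} (Fsel s 0 u) (min 1 (u / s))"
    and "u / s \<noteq> 1 \<Longrightarrow> {min 1 (u / s)<..<max 1 (u / s)} \<subseteq> S \<Longrightarrow>
      \<not> loc_asym_stable S (Fsel s 0 u) (max 1 (u / s))"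
proof -
  have F: "Fsel s 0 u y = s * (y - min 1 (u / s)) * (y - max 1 (u / s))" for y
    using \<open>0 < s\<close> by (auto simp: Fsel_def min_def max_def field_simps)
  show "{y. Fsel s 0 u y = 0} = {1, u / s}"
    using \<open>0 < s\<close> by (auto simp: F min_def max_def)
  show "loc_asym_stable {0..1} (Fsel s 0 u) (min 1 (u / s))"
  proof (cases "u / s = 1")
    case True
    then have F1: "Fsel s 0 u y = s * (y - 1)\<^sup>2" for y using F[of y] by (simp add: power2_eq_square)
    have "min 1 (u / s) = 1" using True by simp
    then show ?thesis
      using \<open>0 < s\<close>
      by (auto intro!: loc_asym_stable_at_upper_end[OF locally_lipschitz_Fsel, where a = 0] simp: F1)
  next
    case False
    then show ?thesis using quadratic_flow_equilibria(1)[OF F] \<open>0 < s\<close> by (simp add: min_def max_def)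
  qed
  show "\<not> loc_asym_stable S (Fsel s 0 u) (max 1 (u / s))"
    if "u / s \<noteq> 1" "{min 1 (u / s)<..<max 1 (u / s)} \<subseteq> S"
    using quadratic_flow_equilibria(2)[OF F] \<open>0 < s\<close> that by (simp add: min_def max_def)
qed

lemma Fsel_unique_equilibrium:
  assumes "0 < \<gamma>" and u_large: "((s + \<gamma>) / 2)\<^sup>2 / \<gamma> < u"
  shows "{y. Fsel s \<gamma> u y = 0} = {1}" and "loc_asym_stable {0..1} (Fsel s \<gamma> u) 1"
proof -
  have q_pos: "0 < \<gamma> * y\<^sup>2 - (s + \<gamma>) * y + u" for y
  proof -
    have "4 * \<gamma> * (\<gamma> * y\<^sup>2 - (s + \<gamma>) * y + u) = (2 * \<gamma> * y - (s + \<gamma>))\<^sup>2 + (4 * \<gamma> * u - (s + \<gamma>)\<^sup>2)"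
      by (simp add: algebra_simps power2_eq_square)
    moreover have "(s + \<gamma>)\<^sup>2 < 4 * \<gamma> * u"
      using u_large \<open>0 < \<gamma>\<close> by (simp add: field_simps power2_eq_square)
    moreover have "0 \<le> (2 * \<gamma> * y - (s + \<gamma>))\<^sup>2" by simp
    ultimately have "0 < 4 * \<gamma> * (\<gamma> * y\<^sup>2 - (s + \<gamma>) * y + u)" by linarith
    then show ?thesis using \<open>0 < \<gamma>\<close> by (simp add: zero_less_mult_iff)
  qed
  have "Fsel s \<gamma> u y = 0 \<longleftrightarrow> y = 1" for y
    using q_pos[of y] by (auto simp: Fsel_eq_factor)
  then show "{y. Fsel s \<gamma> u y = 0} = {1}" by auto
  show "loc_asym_stable {0..1} (Fsel s \<gamma> u) 1"
    using q_pos by (intro loc_asym_stable_if_attracting[OF locally_lipschitz_Fsel, where a = 0 and b = 2])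
      (auto simp: Fsel_eq_factor mult_less_0_iff)
qed

locale Fsel_roots =
  fixes s \<gamma> u y2 y3 :: real
  assumes s_pos: "0 < s" and u_pos: "0 < u" and gamma_pos: "0 < \<gamma>"
    and roots_le: "y2 \<le> y3" and roots_sum: "y2 + y3 = 1 + s / \<gamma>" and roots_prod: "y2 * y3 = u / \<gamma>"
begin

lemma Fsel_eq: "Fsel s \<gamma> u y = \<gamma> * (1 - y) * (y - y2) * (y - y3)"
proof -
  have "\<gamma> * (y - y2) * (y - y3) = \<gamma> * y\<^sup>2 - \<gamma> * (y2 + y3) * y + \<gamma> * (y2 * y3)"
    by (simp add: algebra_simps power2_eq_square)
  also have "\<dots> = \<gamma> * y\<^sup>2 - (s + \<gamma>) * y + u"
    using gamma_pos by (simp add: roots_sum roots_prod algebra_simps)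
  finally show ?thesis by (simp add: Fsel_eq_factor mult.assoc)
qed

lemma equilibria: "{y. Fsel s \<gamma> u y = 0} = {1, y2, y3}"
  using gamma_pos by (auto simp: Fsel_eq)

lemma y2_pos: "0 < y2"
proof -
  have "0 < y2 * y3" "0 < y2 + y3"
    using s_pos u_pos gamma_pos by (simp_all add: roots_prod roots_sum add_pos_pos)
  then show ?thesis using roots_le by (auto simp: zero_less_mult_iff)
qed

lemma one_minus_roots: "(1 - y2) * (1 - y3) = (u - s) / \<gamma>"
proof -
  have "(1 - y2) * (1 - y3) = 1 - (y2 + y3) + y2 * y3" by (simp add: algebra_simps)
  then show ?thesis using gamma_pos by (simp add: roots_sum roots_prod field_simps)
qed

lemma roots_gap: "(y3 - y2)\<^sup>2 = 4 * (((s + \<gamma>) / 2)\<^sup>2 / \<gamma> - u) / \<gamma>"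
proof -
  have "(y3 - y2)\<^sup>2 = (y2 + y3)\<^sup>2 - 4 * (y2 * y3)" by (simp add: algebra_simps power2_eq_square)
  also have "\<dots> = (1 + s / \<gamma>)\<^sup>2 - 4 * (u / \<gamma>)" by (simp only: roots_sum roots_prod)
  also have "\<dots> = 4 * (((s + \<gamma>) / 2)\<^sup>2 / \<gamma> - u) / \<gamma>"
    using gamma_pos by (simp add: field_simps power2_eq_square)
  finally show ?thesis .
qed

lemma double_root_iff: "y2 = y3 \<longleftrightarrow> u = ((s + \<gamma>) / 2)\<^sup>2 / \<gamma>"
  using roots_gap gamma_pos by auto

lemma double_root: "y2 = y3 \<Longrightarrow> y2 = (\<gamma> + s) / (2 * \<gamma>)"
  using roots_sum gamma_pos by (simp add: field_simps)

lemmas sign_simps = Fsel_eq zero_less_mult_iff mult_less_0_iff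

lemma stable_equilibria_root_below_one:
  assumes "y2 < 1" "1 \<le> y3"
  shows "stable_equilibria {0..1} (Fsel s \<gamma> u) = {y2}"
proof -
  have "loc_asym_stable {0..1} (Fsel s \<gamma> u) y2"
    using assms y2_pos gamma_pos
    by (intro loc_asym_stable_if_attracting[OF locally_lipschitz_Fsel, where a = 0 and b = "(y2 + 1) / 2"])
      (auto simp: sign_simps)
  moreover have "\<not> loc_asym_stable {0..1} (Fsel s \<gamma> u) 1"
    using assms y2_pos gamma_pos
    by (intro not_loc_asym_stable_if_repelling_left[OF locally_lipschitz_Fsel, where a = y2])
      (auto simp: sign_simps)
  ultimately show ?thesis
    using assms y2_pos by (auto simp: stable_equilibria_def equilibria[unfolded set_eq_iff mem_Collect_eq])
qed

lemma stable_equilibria_roots_above_one: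
  assumes "1 \<le> y2"
  shows "stable_equilibria {0..1} (Fsel s \<gamma> u) = {1}"
  using assms roots_le gamma_pos
  by (intro stable_equilibria_eq_upper_end locally_lipschitz_Fsel) (auto simp: sign_simps)

lemma stable_equilibria_distinct_roots_below_one:
  assumes "y2 < y3" "y3 < 1"
  shows "stable_equilibria {0..1} (Fsel s \<gamma> u) = {y2, 1}"
proof -
  have "loc_asym_stable {0..1} (Fsel s \<gamma> u) y2"
    using assms y2_pos gamma_pos
    by (intro loc_asym_stable_if_attracting[OF locally_lipschitz_Fsel, where a = 0 and b = "(y2 + y3) / 2"])
      (auto simp: sign_simps)
  moreover have "loc_asym_stable {0..1} (Fsel s \<gamma> u) 1"
    using assms gamma_pos
    by (intro loc_asym_stable_at_upper_end[OF locally_lipschitz_Fsel, where a = "(y3 + 1) / 2"])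
      (auto simp: sign_simps)
  moreover have "\<not> loc_asym_stable {0..1} (Fsel s \<gamma> u) y3"
    using assms y2_pos gamma_pos
    by (intro not_loc_asym_stable_if_repelling_left[OF locally_lipschitz_Fsel, where a = y2])
      (auto simp: sign_simps)
  ultimately show ?thesis
    using assms y2_pos by (auto simp: stable_equilibria_def equilibria[unfolded set_eq_iff mem_Collect_eq])
qed

lemma stable_equilibria_double_root_below_one:
  assumes "y2 = y3" "y3 < 1"
  shows "stable_equilibria {0..1} (Fsel s \<gamma> u) = {1}"
proof -
  have "loc_asym_stable {0..1} (Fsel s \<gamma> u) 1"
    using assms gamma_pos
    by (intro loc_asym_stable_at_upper_end[OF locally_lipschitz_Fsel, where a = "(y3 + 1) / 2"])
      (auto simp: sign_simps)
  moreover have "\<not> loc_asym_stable {0..1} (Fsel s \<gamma> u) y2"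
    using assms y2_pos gamma_pos
    by (intro not_loc_asym_stable_if_repelling_right[OF locally_lipschitz_Fsel, where b = 1])
      (auto simp: sign_simps)
  ultimately show ?thesis
    using assms y2_pos by (auto simp: stable_equilibria_def equilibria[unfolded set_eq_iff mem_Collect_eq])
qed

lemma regime_u_less_s:
  assumes "u < s"
  shows "0 < y2 \<and> y2 < 1 \<and> 1 < y3 \<and> stable_equilibria {0..1} (Fsel s \<gamma> u) = {y2}"
proof -
  have "(1 - y2) * (1 - y3) < 0" using assms gamma_pos by (simp add: one_minus_roots divide_neg_pos)
  then have "y2 < 1" "1 < y3" using roots_le by (auto simp: mult_less_0_iff)
  then show ?thesis using y2_pos stable_equilibria_root_below_one by simp
qed

lemma regime_u_eq_s:
  assumes "u = s"
  shows "\<gamma> < s \<Longrightarrow> y2 = 1 \<and> 1 < y3 \<and> y3 = s / \<gamma> \<and> stable_equilibria {0..1} (Fsel s \<gamma> u) = {1}"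
    and "\<gamma> = s \<Longrightarrow> y2 = 1 \<and> y3 = 1 \<and> stable_equilibria {0..1} (Fsel s \<gamma> u) = {1}"
    and "s < \<gamma> \<Longrightarrow> 0 < y2 \<and> y2 = s / \<gamma> \<and> y2 < 1 \<and> y3 = 1 \<and> stable_equilibria {0..1} (Fsel s \<gamma> u) = {y2}"
proof -
  have "y2 = 1 \<or> y3 = 1" using one_minus_roots assms by simp
  then have one_root: "y2 = 1 \<and> y3 = s / \<gamma> \<or> y3 = 1 \<and> y2 = s / \<gamma>" using roots_sum by auto
  show "\<gamma> < s \<Longrightarrow> y2 = 1 \<and> 1 < y3 \<and> y3 = s / \<gamma> \<and> stable_equilibria {0..1} (Fsel s \<gamma> u) = {1}"
    using one_root roots_le gamma_pos stable_equilibria_roots_above_one by auto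
  show "\<gamma> = s \<Longrightarrow> y2 = 1 \<and> y3 = 1 \<and> stable_equilibria {0..1} (Fsel s \<gamma> u) = {1}"
    using one_root gamma_pos stable_equilibria_roots_above_one by auto
  show "s < \<gamma> \<Longrightarrow> 0 < y2 \<and> y2 = s / \<gamma> \<and> y2 < 1 \<and> y3 = 1 \<and> stable_equilibria {0..1} (Fsel s \<gamma> u) = {y2}"
    using one_root roots_le gamma_pos y2_pos stable_equilibria_root_below_one by auto
qed

lemma regime_s_less_u:
  assumes "s < u" "u < ((s + \<gamma>) / 2)\<^sup>2 / \<gamma>"
  shows "\<gamma> < s \<Longrightarrow> 1 < y2 \<and> y2 < y3 \<and> stable_equilibria {0..1} (Fsel s \<gamma> u) = {1}"
    and "s < \<gamma> \<Longrightarrow> 0 < y2 \<and> y2 < y3 \<and> y3 < 1 \<and> stable_equilibria {0..1} (Fsel s \<gamma> u) = {y2, 1}"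
proof -
  have "y2 < y3" using double_root_iff roots_le assms(2) by auto
  have "0 < (1 - y2) * (1 - y3)" using assms(1) gamma_pos by (simp add: one_minus_roots)
  then have same_side: "y2 < 1 \<and> y3 < 1 \<or> 1 < y2 \<and> 1 < y3" by (auto simp: zero_less_mult_iff)
  show "1 < y2 \<and> y2 < y3 \<and> stable_equilibria {0..1} (Fsel s \<gamma> u) = {1}" if "\<gamma> < s"
  proof -
    have "2 < y2 + y3" using that gamma_pos by (simp add: roots_sum field_simps)
    then have "1 < y2" using same_side by linarith
    then show ?thesis using stable_equilibria_roots_above_one \<open>y2 < y3\<close> by simp
  qed
  show "0 < y2 \<and> y2 < y3 \<and> y3 < 1 \<and> stable_equilibria {0..1} (Fsel s \<gamma> u) = {y2, 1}" if "s < \<gamma>"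
  proof -
    have "y2 + y3 < 2" using that gamma_pos by (simp add: roots_sum field_simps)
    then have "y3 < 1" using same_side by linarith
    then show ?thesis using stable_equilibria_distinct_roots_below_one \<open>y2 < y3\<close> y2_pos by simp
  qed
qed

lemma regime_double_root:
  assumes "u = ((s + \<gamma>) / 2)\<^sup>2 / \<gamma>"
  shows "\<gamma> < s \<Longrightarrow>
      1 < y2 \<and> y2 = y3 \<and> y2 = (\<gamma> + s) / (2 * \<gamma>) \<and> stable_equilibria {0..1} (Fsel s \<gamma> u) = {1}"
    and "\<gamma> = s \<Longrightarrow> y2 = 1 \<and> y3 = 1 \<and> stable_equilibria {0..1} (Fsel s \<gamma> u) = {1}"
    and "s < \<gamma> \<Longrightarrow> 1/2 < y2 \<and> y2 = y3 \<and> y2 = (\<gamma> + s) / (2 * \<gamma>) \<and> y3 < 1 \<and>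
      stable_equilibria {0..1} (Fsel s \<gamma> u) = {1}"
proof -
  have "y2 = y3" using double_root_iff assms by simp
  then have y2: "y2 = (\<gamma> + s) / (2 * \<gamma>)" by (rule double_root)
  show "1 < y2 \<and> y2 = y3 \<and> y2 = (\<gamma> + s) / (2 * \<gamma>) \<and> stable_equilibria {0..1} (Fsel s \<gamma> u) = {1}"
    if "\<gamma> < s"
  proof -
    have "1 < y2" unfolding y2 using that gamma_pos by (simp add: field_simps)
    then show ?thesis using stable_equilibria_roots_above_one \<open>y2 = y3\<close> y2 by simp
  qed
  show "y2 = 1 \<and> y3 = 1 \<and> stable_equilibria {0..1} (Fsel s \<gamma> u) = {1}" if "\<gamma> = s"
    using y2 that gamma_pos \<open>y2 = y3\<close> stable_equilibria_roots_above_one by simp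
  show "1/2 < y2 \<and> y2 = y3 \<and> y2 = (\<gamma> + s) / (2 * \<gamma>) \<and> y3 < 1 \<and>
      stable_equilibria {0..1} (Fsel s \<gamma> u) = {1}" if "s < \<gamma>"
  proof -
    have "1/2 < y2" "y2 < 1" unfolding y2 using that gamma_pos s_pos by (simp_all add: field_simps)
    then show ?thesis using stable_equilibria_double_root_below_one \<open>y2 = y3\<close> y2 by simp
  qed
qed

end

lemma Fsel_roots_quadratic_formula:
  fixes s \<gamma> u :: real
  assumes "0 < s" "0 < u" "0 < \<gamma>" and u_le: "u \<le> ((s + \<gamma>) / 2)\<^sup>2 / \<gamma>"
  defines "\<sigma> \<equiv> (1 + s / \<gamma>)\<^sup>2 - 4 * u / \<gamma>"
  shows "0 \<le> \<sigma>" and "Fsel_roots s \<gamma> u ((1 + s / \<gamma> - sqrt \<sigma>) / 2) ((1 + s / \<gamma> + sqrt \<sigma>) / 2)"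
proof -
  have "\<sigma> = 4 * (((s + \<gamma>) / 2)\<^sup>2 / \<gamma> - u) / \<gamma>"
    using \<open>0 < \<gamma>\<close> by (simp add: \<sigma>_def field_simps power2_eq_square)
  then show "0 \<le> \<sigma>" using u_le \<open>0 < \<gamma>\<close> by simp
  have "(1 + s / \<gamma> - sqrt \<sigma>) / 2 * ((1 + s / \<gamma> + sqrt \<sigma>) / 2) = ((1 + s / \<gamma>)\<^sup>2 - (sqrt \<sigma>)\<^sup>2) / 4"
    by (simp add: field_simps power2_eq_square)
  also have "\<dots> = u / \<gamma>" using \<open>0 \<le> \<sigma>\<close> by (simp add: \<sigma>_def)
  finally show "Fsel_roots s \<gamma> u ((1 + s / \<gamma> - sqrt \<sigma>) / 2) ((1 + s / \<gamma> + sqrt \<sigma>) / 2)"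
    using \<open>0 < s\<close> \<open>0 < u\<close> \<open>0 < \<gamma>\<close> \<open>0 \<le> \<sigma>\<close> by unfold_locales (simp_all add: add_divide_distrib[symmetric])
qed

theorem proposition2p2:
  fixes s \<gamma> u :: real
  assumes hs: "s > 0" and hu: "u > 0" and hg: "\<gamma> \<ge> 0"
  defines "F \<equiv> Fsel s \<gamma> u"
    and "uhat \<equiv> s"
    and "ucheck \<equiv> ((s + \<gamma>) / 2)\<^sup>2 / \<gamma>"
    and "\<sigma> \<equiv> (1 + s / \<gamma>)\<^sup>2 - 4 * u / \<gamma>"
    and "y2 \<equiv> (1 + s / \<gamma> - sqrt ((1 + s / \<gamma>)\<^sup>2 - 4 * u / \<gamma>)) / 2"
    and "y3 \<equiv> (1 + s / \<gamma> + sqrt ((1 + s / \<gamma>)\<^sup>2 - 4 * u / \<gamma>)) / 2"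
    and "Stab \<equiv> {y \<in> {0..1}. Fsel s \<gamma> u y = 0 \<and> loc_asym_stable {0..1} (Fsel s \<gamma> u) y}"
  shows
   "(\<gamma> = 0 \<longrightarrow>
       {y. F y = 0} = {1, u / s} \<and>
       (u = uhat \<longrightarrow> u / s = 1) \<and>
       loc_asym_stable {0..1} F (min 1 (u / s)) \<and>
       (u / s \<noteq> 1 \<longrightarrow>
          \<not> loc_asym_stable UNIV F (max 1 (u / s)) \<and>
          (max 1 (u / s) \<in> {0..1} \<longrightarrow> \<not> loc_asym_stable {0..1} F (max 1 (u / s)))))
    \<and>
    (\<gamma> > 0 \<longrightarrow>
       (u > ucheck \<longrightarrow> {y. F y = 0} = {1} \<and> loc_asym_stable {0..1} F 1) \<and>
       (u \<le> ucheck \<longrightarrow>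
          \<sigma> \<ge> 0 \<and> {y. F y = 0} = {1, y2, y3} \<and>
          (u < uhat \<longrightarrow> 0 < y2 \<and> y2 < 1 \<and> 1 < y3 \<and> Stab = {y2}) \<and>
          (u = uhat \<and> \<gamma> < s \<longrightarrow> y2 = 1 \<and> 1 < y3 \<and> y3 = s / \<gamma> \<and> Stab = {1}) \<and>
          (u = uhat \<and> \<gamma> = s \<longrightarrow> y2 = 1 \<and> y3 = 1 \<and> Stab = {1}) \<and>
          (u = uhat \<and> \<gamma> > s \<longrightarrow> 0 < y2 \<and> y2 = s / \<gamma> \<and> y2 < 1 \<and> y3 = 1 \<and> Stab = {y2}) \<and>
          (uhat < u \<and> u < ucheck \<and> \<gamma> < s \<longrightarrow> 1 < y2 \<and> y2 < y3 \<and> Stab = {1}) \<and>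
          (uhat < u \<and> u < ucheck \<and> \<gamma> > s \<longrightarrow>
              0 < y2 \<and> y2 < y3 \<and> y3 < 1 \<and> Stab = {y2, 1}) \<and>
          (u = ucheck \<and> \<gamma> < s \<longrightarrow>
              1 < y2 \<and> y2 = y3 \<and> y2 = (\<gamma> + s) / (2 * \<gamma>) \<and> Stab = {1}) \<and>
          (u = ucheck \<and> \<gamma> = s \<longrightarrow> y2 = 1 \<and> y3 = 1 \<and> Stab = {1}) \<and>
          (u = ucheck \<and> \<gamma> > s \<longrightarrow>
              1/2 < y2 \<and> y2 = y3 \<and> y2 = (\<gamma> + s) / (2 * \<gamma>) \<and> y3 < 1 \<and> Stab = {1})))"
proof (cases "\<gamma> = 0")
  case True
  have "{min 1 (u / s)<..<max 1 (u / s)} \<subseteq> {0..1}" if "max 1 (u / s) \<in> {0..1}"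
    using that divide_pos_pos[OF hu hs] by auto
  moreover have "u = uhat \<Longrightarrow> u / s = 1" using hs by (simp add: uhat_def)
  ultimately show ?thesis
    using True Fsel_gamma_zero_equilibria(3)[OF hs hu, where S = UNIV] Fsel_gamma_zero_equilibria[OF hs hu]
    unfolding F_def by blast
next
  case False
  then have "0 < \<gamma>" using hg by simp
  show ?thesis
  proof (cases "u \<le> ucheck")
    case False
    then have "((s + \<gamma>) / 2)\<^sup>2 / \<gamma> < u" unfolding ucheck_def by simp
    then show ?thesis
      using Fsel_unique_equilibrium[OF \<open>0 < \<gamma>\<close>] \<open>0 < \<gamma>\<close> False unfolding F_def by blast
  next
    case True
    then interpret Fsel_roots s \<gamma> u y2 y3
      using Fsel_roots_quadratic_formula(2)[OF hs hu \<open>0 < \<gamma>\<close>] unfolding y2_def y3_def ucheck_def by blast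
    have "0 \<le> \<sigma>"
      using Fsel_roots_quadratic_formula(1)[OF hs hu \<open>0 < \<gamma>\<close>] True unfolding \<sigma>_def ucheck_def .
    moreover have "Stab = stable_equilibria {0..1} F" by (simp add: Stab_def F_def stable_equilibria_def)
    ultimately show ?thesis
      using True \<open>0 < \<gamma>\<close> equilibria regime_u_less_s regime_u_eq_s regime_s_less_u regime_double_root
      unfolding F_def uhat_def ucheck_def by (smt (verit))
  qed
qed

end
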